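(* Let $(X,\Sigma,\mu)$ be a measure space, $n,l\ge1$, $\mathbb{F}\in\{\mathbb{R},\mathbb{C}\}$, $(X_j)_{j\in[1,l]}$ a partition of $X$ into measurable subsets, and $h\in L^2(X,\mu;\mathbb{F})$. Suppose there are measurable subsets $Y_j\subseteq X_j$, $j\in[1,l]$, such that $\mu\big((X_j\setminus Y_j)\cap h^{-1}(\mathbb{F}\setminus\{0\})\big)>0$ for every $j\in[1,l]$ and $\sum_{j=1}^l\dim L^2(Y_j,\mu;\mathbb{F})\ge n$. Define $W:L^2(X,\mu;\mathbb{F}^n)\to\prod_{j\in[1,l]}\mathbb{F}^n$ by $W(F)=\big(\int_{X_j}h(x)f_x\,d\mu(x)\big)_{j\in[1,l]}$ for $F=(f_x)_{x\in X}$. Then for every $D=(d_j)_{j\in[1,l]}\in\prod_{j\in[1,l]}\mathbb{F}^n$, $W^{-1}(\{D\})$ contains at least one continuous frame $\Phi\in\mathcal{F}^{\mathbb{F}}_{(X,\mu),n}$.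
   Context: A family $\Phi=(\varphi_x)_{x\in X}$ in $\mathbb{F}^n$ (with measurable coordinates) is a continuous frame indexed by $(X,\mu)$ if there are $0<A\le B$ with $A\|v\|^2\le\int_X|\langle v,\varphi_x\rangle|^2d\mu(x)\le B\|v\|^2$ for all $v\in\mathbb{F}^n$. $\mathcal{F}^{\mathbb{F}}_{(X,\mu),n}$ denotes the set of such frames, viewed as a subset of $L^2(X,\mu;\mathbb{F}^n)$. $L^2(Y_j,\mu;\mathbb{F})$ is the $L^2$ space of the restriction of $\mu$ to $Y_j$. *)

theory Defs
  imports "HOL-Analysis.Analysis"
begin

text \<open>The field F in {R, C} is modelled as a subset K of the complex numbers with
  K = Reals or K = UNIV. Vectors in F^n are complex vectors with components in K.\<close>

definition field_choice :: "complex set \<Rightarrow> bool" where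
  "field_choice K \<longleftrightarrow> K = \<real> \<or> K = UNIV"

definition in_Kn :: "complex set \<Rightarrow> complex ^ 'n \<Rightarrow> bool" where
  "in_Kn K v \<longleftrightarrow> (\<forall>i. v $ i \<in> K)"

definition cinner_vec :: "complex ^ 'n::finite \<Rightarrow> complex ^ 'n \<Rightarrow> complex" where
  "cinner_vec v w = (\<Sum>i\<in>UNIV. v $ i * cnj (w $ i))"

definition L2_scalar :: "'a measure \<Rightarrow> complex set \<Rightarrow> ('a \<Rightarrow> complex) \<Rightarrow> bool" where
  "L2_scalar M K f \<longleftrightarrow> f \<in> borel_measurable M \<and> (\<forall>x\<in>space M. f x \<in> K)
     \<and> integrable M (\<lambda>x. (cmod (f x))\<^sup>2)"

definition L2_vec :: "'a measure \<Rightarrow> complex set \<Rightarrow> ('a \<Rightarrow> complex ^ 'n::finite) \<Rightarrow> bool" where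
  "L2_vec M K F \<longleftrightarrow> F \<in> borel_measurable M \<and> (\<forall>x\<in>space M. in_Kn K (F x))
     \<and> integrable M (\<lambda>x. (norm (F x))\<^sup>2)"

text \<open>Dimension (as an extended natural) of the K-vector space L2(M;K), i.e. the
  supremum of the sizes of finite families that are linearly independent modulo
  equality almost everywhere.\<close>
definition L2_dim :: "'a measure \<Rightarrow> complex set \<Rightarrow> enat" where
  "L2_dim M K = Sup {enat m | m. \<exists>f :: nat \<Rightarrow> 'a \<Rightarrow> complex.
      (\<forall>i<m. L2_scalar M K (f i)) \<and>
      (\<forall>c. (\<forall>i<m. c i \<in> K) \<longrightarrow> (AE x in M. (\<Sum>i<m. c i * f i x) = 0)
             \<longrightarrow> (\<forall>i<m. c i = 0))}"

definition cont_frame :: "'a measure \<Rightarrow> complex set \<Rightarrow> ('a \<Rightarrow> complex ^ 'n::finite) \<Rightarrow> bool" where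
  "cont_frame M K \<Phi> \<longleftrightarrow> (\<forall>x\<in>space M. in_Kn K (\<Phi> x)) \<and> (\<forall>i. (\<lambda>x. \<Phi> x $ i) \<in> borel_measurable M) \<and>
     (\<exists>A B. 0 < A \<and> A \<le> B \<and> (\<forall>v. in_Kn K v \<longrightarrow>
        ennreal (A * (norm v)\<^sup>2) \<le> (\<integral>\<^sup>+ x. ennreal ((cmod (cinner_vec v (\<Phi> x)))\<^sup>2) \<partial>M) \<and>
        (\<integral>\<^sup>+ x. ennreal ((cmod (cinner_vec v (\<Phi> x)))\<^sup>2) \<partial>M) \<le> ennreal (B * (norm v)\<^sup>2)))"

definition W_op :: "'a measure \<Rightarrow> ('a \<Rightarrow> complex) \<Rightarrow> (nat \<Rightarrow> 'a set) \<Rightarrow> ('a \<Rightarrow> complex ^ 'n::finite)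
     \<Rightarrow> nat \<Rightarrow> complex ^ 'n" where
  "W_op M h X F = (\<lambda>j. \<chi> i. (LINT x:X j|M. h x * F x $ i))"

end

theory Submission
  imports Defs
begin

text \<open>By the dimension hypothesis, independent families in the spaces L2(Y_j) can be glued
  (the Y_j are disjoint) into CARD('n) square-integrable functions g_k that vanish outside the
  union of the Y_j and are linearly independent modulo null functions. Independence makes the
  quadratic form v \<mapsto> \<integral> |\<langle>v, g(x)\<rangle>|^2 positive on the unit sphere of F^n,
  so by compactness g is a frame. To prescribe W, add on each X_j - Y_j a multiple b_jk of the
  conjugate of h: as h is not almost everywhere zero there, the integral of |h|^2 over
  X_j - Y_j is positive and b_jk can be solved for, while the frame property survives because
  nothing changes on the Y_j.\<close>

section \<open>Square-integrable functions\<close>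

definition square_integrable :: "'a measure \<Rightarrow> ('a \<Rightarrow> complex) \<Rightarrow> bool" where
  "square_integrable M u \<longleftrightarrow> u \<in> borel_measurable M \<and> integrable M (\<lambda>x. (cmod (u x))\<^sup>2)"

lemma L2_scalar_imp_square_integrable: "L2_scalar M K u \<Longrightarrow> square_integrable M u"
  unfolding L2_scalar_def square_integrable_def by blast

lemma square_integrable_add:
  assumes u: "square_integrable M u" and v: "square_integrable M v"
  shows "square_integrable M (\<lambda>x. u x + v x)"
  unfolding square_integrable_def
proof
  show meas: "(\<lambda>x. u x + v x) \<in> borel_measurable M"
    using u v unfolding square_integrable_def by auto
  have bound: "(cmod (a + b))\<^sup>2 \<le> 2 * (cmod a)\<^sup>2 + 2 * (cmod b)\<^sup>2" for a b :: complex
  proof -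
    have "(cmod (a + b))\<^sup>2 \<le> (cmod a + cmod b)\<^sup>2"
      by (rule power_mono[OF norm_triangle_ineq]) simp
    also have "\<dots> \<le> 2 * (cmod a)\<^sup>2 + 2 * (cmod b)\<^sup>2"
      using sum_squares_bound[of "cmod a" "cmod b"] by (simp add: power2_sum)
    finally show ?thesis .
  qed
  show "integrable M (\<lambda>x. (cmod (u x + v x))\<^sup>2)"
  proof (rule Bochner_Integration.integrable_bound[OF _ _ AE_I2])
    show "integrable M (\<lambda>x. 2 * (cmod (u x))\<^sup>2 + 2 * (cmod (v x))\<^sup>2)"
      using u v unfolding square_integrable_def by simp
    show "(\<lambda>x. (cmod (u x + v x))\<^sup>2) \<in> borel_measurable M"
      using meas by measurable
  qed (use bound in simp)
qed

lemma square_integrable_mult_left: "square_integrable M u \<Longrightarrow> square_integrable M (\<lambda>x. c * u x)"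
  unfolding square_integrable_def by (auto simp: norm_mult power_mult_distrib)

lemma square_integrable_cnj: "square_integrable M u \<Longrightarrow> square_integrable M (\<lambda>x. cnj (u x))"
  unfolding square_integrable_def
  by (auto intro: borel_measurable_continuous_on[OF continuous_on_cnj[OF continuous_on_id]])

lemma square_integrable_indicator:
  assumes "A \<in> sets M" and u: "square_integrable M u"
  shows "square_integrable M (\<lambda>x. indicator A x *\<^sub>R u x)"
  unfolding square_integrable_def
proof
  show meas: "(\<lambda>x. indicator A x *\<^sub>R u x) \<in> borel_measurable M"
    using assms unfolding square_integrable_def by auto
  show "integrable M (\<lambda>x. (cmod (indicator A x *\<^sub>R u x))\<^sup>2)"
  proof (rule Bochner_Integration.integrable_bound[OF _ _ AE_I2])
    show "integrable M (\<lambda>x. (cmod (u x))\<^sup>2)"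
      using u unfolding square_integrable_def by simp
    show "(\<lambda>x. (cmod (indicator A x *\<^sub>R u x))\<^sup>2) \<in> borel_measurable M"
      using meas by measurable
  qed (simp split: split_indicator)
qed

lemma square_integrable_sum:
  "finite S \<Longrightarrow> (\<And>i. i \<in> S \<Longrightarrow> square_integrable M (f i)) \<Longrightarrow>
    square_integrable M (\<lambda>x. \<Sum>i\<in>S. f i x)"
  by (induction S rule: finite_induct)
    (simp_all add: square_integrable_add square_integrable_def[of M "\<lambda>x. 0"])

lemma integrable_mult_square_integrable:
  assumes u: "square_integrable M u" and v: "square_integrable M v"
  shows "integrable M (\<lambda>x. u x * v x)"
proof (rule Bochner_Integration.integrable_bound[OF _ _ AE_I2])
  show "integrable M (\<lambda>x. (cmod (u x))\<^sup>2 + (cmod (v x))\<^sup>2)"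
    using u v unfolding square_integrable_def by simp
  show "(\<lambda>x. u x * v x) \<in> borel_measurable M"
    using u v unfolding square_integrable_def by auto
  fix x
  have "cmod (u x) * cmod (v x) \<le> (cmod (u x))\<^sup>2 + (cmod (v x))\<^sup>2"
    using sum_squares_bound[of "cmod (u x)" "cmod (v x)", unfolded mult.assoc]
      mult_nonneg_nonneg[OF norm_ge_zero norm_ge_zero, of "u x" "v x"] by linarith
  then show "norm (u x * v x) \<le> norm ((cmod (u x))\<^sup>2 + (cmod (v x))\<^sup>2)"
    by (simp add: norm_mult)
qed

section \<open>Real or complex scalars\<close>

lemma field_choiceE: "field_choice K \<Longrightarrow> (K = \<real> \<Longrightarrow> P) \<Longrightarrow> (K = UNIV \<Longrightarrow> P) \<Longrightarrow> P"
  unfolding field_choice_def by blast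

lemma field_choice_of_real: "field_choice K \<Longrightarrow> complex_of_real r \<in> K"
  by (erule field_choiceE) auto

lemma field_choice_zero: "field_choice K \<Longrightarrow> 0 \<in> K"
  using field_choice_of_real[of K 0] by simp

lemma field_choice_cnj: "field_choice K \<Longrightarrow> z \<in> K \<Longrightarrow> cnj z \<in> K"
  by (erule field_choiceE) (auto simp: Reals_cnj_iff)

lemma field_choice_add: "field_choice K \<Longrightarrow> z \<in> K \<Longrightarrow> w \<in> K \<Longrightarrow> z + w \<in> K"
  by (erule field_choiceE) auto

lemma field_choice_diff: "field_choice K \<Longrightarrow> z \<in> K \<Longrightarrow> w \<in> K \<Longrightarrow> z - w \<in> K"
  by (erule field_choiceE) auto

lemma field_choice_mult: "field_choice K \<Longrightarrow> z \<in> K \<Longrightarrow> w \<in> K \<Longrightarrow> z * w \<in> K"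
  by (erule field_choiceE) auto

lemma field_choice_divide: "field_choice K \<Longrightarrow> z \<in> K \<Longrightarrow> w \<in> K \<Longrightarrow> z / w \<in> K"
  by (erule field_choiceE) auto

lemma field_choice_sum: "field_choice K \<Longrightarrow> (\<And>i. i \<in> S \<Longrightarrow> c i \<in> K) \<Longrightarrow> sum c S \<in> K"
  by (erule field_choiceE) (auto intro: sum_in_Reals)

lemma integral_in_field_choice:
  fixes f :: "'a \<Rightarrow> complex"
  assumes K: "field_choice K" and f: "\<And>x. x \<in> space M \<Longrightarrow> f x \<in> K"
  shows "integral\<^sup>L M f \<in> K"
proof (rule field_choiceE[OF K])
  assume KR: "K = \<real>"
  have "integral\<^sup>L M f = integral\<^sup>L M (\<lambda>x. complex_of_real (Re (f x)))"
    by (rule Bochner_Integration.integral_cong) (use f KR in auto)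
  then show ?thesis
    using KR by simp
qed simp

section \<open>Linear independence modulo null functions\<close>

definition ae_independent :: "'a measure \<Rightarrow> complex set \<Rightarrow> 'i set \<Rightarrow> ('i \<Rightarrow> 'a \<Rightarrow> complex) \<Rightarrow> bool" where
  "ae_independent M K I f \<longleftrightarrow>
     (\<forall>c. (\<forall>i\<in>I. c i \<in> K) \<longrightarrow> (AE x in M. (\<Sum>i\<in>I. c i * f i x) = 0) \<longrightarrow> (\<forall>i\<in>I. c i = 0))"

lemma L2_dim_eq_Sup_ae_independent:
  "L2_dim M K = Sup {enat m | m. \<exists>f. (\<forall>i<m. L2_scalar M K (f i)) \<and> ae_independent M K {..<m} f}"
  unfolding L2_dim_def ae_independent_def by (simp add: Ball_def)

lemma L2_dim_attained_or_exceeded: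
  "\<exists>m f. (\<forall>i<m. L2_scalar M K (f i)) \<and> ae_independent M K {..<m} f \<and> (L2_dim M K \<le> enat m \<or> n \<le> m)"
proof (cases "\<exists>m f. (\<forall>i<m. L2_scalar M K (f i)) \<and> ae_independent M K {..<m} f \<and> n \<le> m")
  case False
  define S where "S = {enat m | m. \<exists>f. (\<forall>i<m. L2_scalar M K (f i)) \<and> ae_independent M K {..<m} f}"
  have "S \<subseteq> enat ` {..<n}"
    using False unfolding S_def by force
  then have fin: "finite S"
    by (rule finite_subset) simp
  have "enat 0 \<in> S"
    unfolding S_def ae_independent_def by simp
  then have ne: "S \<noteq> {}"
    by blast
  have "Sup S \<in> S"
    using cSup_eq_Max[OF fin ne] Max_in[OF fin ne] by simp
  then obtain m f where "L2_dim M K = enat m" "\<forall>i<m. L2_scalar M K (f i)" "ae_independent M K {..<m} f"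
    unfolding L2_dim_eq_Sup_ae_independent S_def by blast
  then show ?thesis
    by auto
qed blast

lemma ae_independent_families_of_total_size:
  assumes "finite J" and dim: "(\<Sum>j\<in>J. L2_dim (M j) K) \<ge> enat n"
  obtains m f where "\<And>j i. j \<in> J \<Longrightarrow> i < m j \<Longrightarrow> L2_scalar (M j) K (f j i)"
    and "\<And>j. j \<in> J \<Longrightarrow> ae_independent (M j) K {..<m j} (f j)"
    and "n \<le> (\<Sum>j\<in>J. m j)"
proof -
  have "\<forall>j. \<exists>m f. (\<forall>i<m. L2_scalar (M j) K (f i)) \<and> ae_independent (M j) K {..<m} f
      \<and> (L2_dim (M j) K \<le> enat m \<or> n \<le> m)"
    using L2_dim_attained_or_exceeded by blast
  then obtain m f where mf: "\<And>j. (\<forall>i<m j. L2_scalar (M j) K (f j i)) \<and> ae_independent (M j) K {..<m j} (f j)"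
    and large: "\<And>j. L2_dim (M j) K \<le> enat (m j) \<or> n \<le> m j"
    by metis
  have "n \<le> (\<Sum>j\<in>J. m j)"
  proof (cases "\<exists>j\<in>J. n \<le> m j")
    case True
    then show ?thesis
      using member_le_sum[OF _ _ \<open>finite J\<close>, of _ m] by (metis le_trans zero_le)
  next
    case False
    then have "(\<Sum>j\<in>J. L2_dim (M j) K) \<le> (\<Sum>j\<in>J. enat (m j))"
      using large by (intro sum_mono) auto
    also have "\<dots> = enat (\<Sum>j\<in>J. m j)"
      by (simp flip: of_nat_eq_enat)
    finally show ?thesis
      using dim by (metis enat_ord_simps(1) order_trans)
  qed
  with mf that show ?thesis
    by blast
qed

lemma ae_independent_subset:
  assumes "0 \<in> K" and "finite I" and "J \<subseteq> I" and ind: "ae_independent M K I f"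
  shows "ae_independent M K J f"
  unfolding ae_independent_def
proof (intro allI impI)
  fix c assume cK: "\<forall>i\<in>J. c i \<in> K" and ae: "AE x in M. (\<Sum>i\<in>J. c i * f i x) = 0"
  define c' where "c' i = (if i \<in> J then c i else 0)" for i
  have "(\<Sum>i\<in>I. c' i * f i x) = (\<Sum>i\<in>J. c i * f i x)" for x
    using assms by (intro sum.mono_neutral_cong_right) (auto simp: c'_def)
  then have "AE x in M. (\<Sum>i\<in>I. c' i * f i x) = 0"
    using ae by simp
  moreover have "\<forall>i\<in>I. c' i \<in> K"
    using cK \<open>0 \<in> K\<close> by (simp add: c'_def)
  ultimately have "\<forall>i\<in>I. c' i = 0"
    using ind unfolding ae_independent_def by blast
  then show "\<forall>i\<in>J. c i = 0"
    using \<open>J \<subseteq> I\<close> unfolding c'_def by (metis subsetD)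
qed

lemma ae_independent_reindex:
  assumes e: "inj_on e J" and ind: "ae_independent M K (e ` J) f"
  shows "ae_independent M K J (\<lambda>k. f (e k))"
  unfolding ae_independent_def
proof (intro allI impI)
  fix c assume cK: "\<forall>k\<in>J. c k \<in> K" and ae: "AE x in M. (\<Sum>k\<in>J. c k * f (e k) x) = 0"
  define c' where "c' = c \<circ> the_inv_into J e"
  have c'e: "c' (e k) = c k" if "k \<in> J" for k
    using e that by (simp add: c'_def the_inv_into_f_f)
  have "(\<Sum>p\<in>e ` J. c' p * f p x) = (\<Sum>k\<in>J. c k * f (e k) x)" for x
    using e c'e by (simp add: sum.reindex)
  then have "AE x in M. (\<Sum>p\<in>e ` J. c' p * f p x) = 0"
    using ae by simp
  moreover have "\<forall>p\<in>e ` J. c' p \<in> K"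
    using cK c'e by auto
  ultimately have "\<forall>p\<in>e ` J. c' p = 0"
    using ind unfolding ae_independent_def by blast
  then show "\<forall>k\<in>J. c k = 0"
    using c'e by force
qed

lemma ae_independent_glue:
  fixes Y :: "'j \<Rightarrow> 'a set" and f :: "'j \<Rightarrow> 'i \<Rightarrow> 'a \<Rightarrow> complex"
  assumes fin: "finite J" "\<And>j. finite (I j)"
    and Y: "\<And>j. j \<in> J \<Longrightarrow> Y j \<in> sets M" and disj: "disjoint_family_on Y J"
    and ind: "\<And>j. j \<in> J \<Longrightarrow> ae_independent (restrict_space M (Y j)) K (I j) (f j)"
  shows "ae_independent M K (Sigma J I) (\<lambda>(j, i) x. indicator (Y j) x *\<^sub>R f j i x)"
proof -
  define G where "G = (\<lambda>(j, i) x. indicator (Y j) x *\<^sub>R f j i x)"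
  have "\<forall>i\<in>I j0. c (j0, i) = 0"
    if j0: "j0 \<in> J" and cK: "\<forall>p\<in>Sigma J I. c p \<in> K"
      and ae: "AE x in M. (\<Sum>p\<in>Sigma J I. c p * G p x) = 0" for c j0
  proof -
    have on_piece: "(\<Sum>p\<in>Sigma J I. c p * G p x) = (\<Sum>i\<in>I j0. c (j0, i) * f j0 i x)"
      if x: "x \<in> Y j0" for x
    proof -
      have "x \<notin> Y j" if "j \<in> J - {j0}" for j
        using disj x that j0 unfolding disjoint_family_on_def by blast
      then have G_off: "G (j, i) x = 0" if "j \<in> J - {j0}" for j i
        using that by (simp add: G_def)
      have "(\<Sum>p\<in>Sigma J I. c p * G p x) = (\<Sum>j\<in>J. \<Sum>i\<in>I j. c (j, i) * G (j, i) x)"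
        using fin by (simp add: sum.Sigma)
      also have "\<dots> = (\<Sum>j\<in>{j0}. \<Sum>i\<in>I j. c (j, i) * G (j, i) x)"
        using fin j0 G_off by (intro sum.mono_neutral_right) auto
      also have "\<dots> = (\<Sum>i\<in>I j0. c (j0, i) * f j0 i x)"
        using x by (simp add: G_def)
      finally show ?thesis .
    qed
    have "AE x in M. x \<in> Y j0 \<longrightarrow> (\<Sum>i\<in>I j0. c (j0, i) * f j0 i x) = 0"
      using ae by eventually_elim (metis on_piece)
    then have "AE x in restrict_space M (Y j0). (\<Sum>i\<in>I j0. c (j0, i) * f j0 i x) = 0"
      using Y[OF j0] by (simp add: AE_restrict_space_iff)
    moreover have "\<forall>i\<in>I j0. c (j0, i) \<in> K"
      using cK j0 by blast
    ultimately show ?thesis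
      using ind[OF j0] unfolding ae_independent_def by (blast dest: spec[where x = "\<lambda>i. c (j0, i)"])
  qed
  then show ?thesis
    unfolding ae_independent_def G_def[symmetric] by fast
qed

lemma L2_scalar_extend_by_zero:
  assumes Y: "Y \<in> sets M" and "0 \<in> K" and u: "L2_scalar (restrict_space M Y) K u"
  shows "L2_scalar M K (\<lambda>x. indicator Y x *\<^sub>R u x)"
proof -
  have Y': "Y \<inter> space M \<in> sets M"
    using Y by simp
  have "(\<lambda>x. indicator Y x *\<^sub>R u x) \<in> borel_measurable M"
    using u unfolding L2_scalar_def borel_measurable_restrict_space_iff[OF Y'] by (rule conjunct1)
  moreover have "integrable M (\<lambda>x. indicator Y x *\<^sub>R (cmod (u x))\<^sup>2)"
    using u unfolding L2_scalar_def integrable_restrict_space[OF Y'] by blast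
  moreover have "indicator Y x *\<^sub>R (cmod (u x))\<^sup>2 = (cmod (indicator Y x *\<^sub>R u x))\<^sup>2" for x
    by (simp split: split_indicator)
  moreover have "indicator Y x *\<^sub>R u x \<in> K" if "x \<in> space M" for x
    using u that \<open>0 \<in> K\<close> unfolding L2_scalar_def by (simp add: space_restrict_space split: split_indicator)
  ultimately show ?thesis
    unfolding L2_scalar_def by simp
qed

lemma ae_independent_family_on_pieces:
  fixes Y :: "'j \<Rightarrow> 'a set"
  assumes K: "field_choice K" and "finite J"
    and Y: "\<And>j. j \<in> J \<Longrightarrow> Y j \<in> sets M" and disj: "disjoint_family_on Y J"
    and dim: "(\<Sum>j\<in>J. L2_dim (restrict_space M (Y j)) K) \<ge> enat CARD('n)"
  obtains g :: "'n::finite \<Rightarrow> 'a \<Rightarrow> complex"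
  where "\<And>k. L2_scalar M K (g k)" and "\<And>k x. g k x \<noteq> 0 \<Longrightarrow> x \<in> (\<Union>j\<in>J. Y j)" and "ae_independent M K UNIV g"
proof -
  obtain m f where f: "\<And>j i. j \<in> J \<Longrightarrow> i < m j \<Longrightarrow> L2_scalar (restrict_space M (Y j)) K (f j i)"
    and ind: "\<And>j. j \<in> J \<Longrightarrow> ae_independent (restrict_space M (Y j)) K {..<m j} (f j)"
    and size: "CARD('n) \<le> (\<Sum>j\<in>J. m j)"
    using ae_independent_families_of_total_size[OF \<open>finite J\<close> dim] by blast
  define I where "I = Sigma J (\<lambda>j. {..<m j})"
  define G where "G = (\<lambda>(j, i) x. indicator (Y j) x *\<^sub>R f j i x)"
  have "finite I"
    using \<open>finite J\<close> unfolding I_def by simp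
  moreover have "CARD('n) \<le> card I"
    using size \<open>finite J\<close> unfolding I_def by (simp add: card_SigmaI)
  ultimately obtain e :: "'n \<Rightarrow> 'j \<times> nat" where e: "range e \<subseteq> I" "inj e"
    using card_le_inj[of "UNIV :: 'n set" I] by auto
  have G_pieces: "L2_scalar M K (G p) \<and> (\<forall>x. G p x \<noteq> 0 \<longrightarrow> x \<in> (\<Union>j\<in>J. Y j))" if "p \<in> I" for p
  proof -
    obtain j i where p: "p = (j, i)" and j: "j \<in> J" and i: "i < m j"
      using \<open>p \<in> I\<close> unfolding I_def by blast
    have "L2_scalar M K (\<lambda>x. indicator (Y j) x *\<^sub>R f j i x)"
      using L2_scalar_extend_by_zero[OF Y[OF j] field_choice_zero[OF K] f[OF j i]] .
    then show ?thesis
      using j by (auto simp: G_def p split: split_indicator)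
  qed
  have "ae_independent M K I G"
    unfolding I_def G_def by (rule ae_independent_glue[OF \<open>finite J\<close> _ Y disj ind]) simp_all
  then have "ae_independent M K (range e) G"
    by (rule ae_independent_subset[OF field_choice_zero[OF K] \<open>finite I\<close> e(1)])
  then have "ae_independent M K UNIV (\<lambda>k. G (e k))"
    by (rule ae_independent_reindex[OF e(2)])
  moreover have "L2_scalar M K (G (e k)) \<and> (\<forall>x. G (e k) x \<noteq> 0 \<longrightarrow> x \<in> (\<Union>j\<in>J. Y j))" for k
    using e(1) by (intro G_pieces) blast
  ultimately show thesis
    using that[of "\<lambda>k. G (e k)"] by blast
qed

section \<open>Frames from nondegenerate families\<close>

lemma borel_measurable_vec_lambda:
  fixes \<phi> :: "'n::finite \<Rightarrow> 'a \<Rightarrow> 'b::euclidean_space"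
  assumes "\<And>i. \<phi> i \<in> borel_measurable M"
  shows "(\<lambda>x. \<chi> i. \<phi> i x) \<in> borel_measurable M"
proof (rule iffD2[OF borel_measurable_euclidean_space], rule ballI)
  fix b :: "'b ^ 'n" assume "b \<in> Basis"
  then obtain i u where b: "b = axis i u"
    unfolding Basis_vec_def by blast
  have "(\<lambda>x. \<phi> i x \<bullet> u) \<in> borel_measurable M"
    by (intro borel_measurable_inner assms borel_measurable_const)
  then show "(\<lambda>x. (\<chi> i. \<phi> i x) \<bullet> b) \<in> borel_measurable M"
    unfolding b inner_axis by simp
qed

lemma borel_measurable_vec_nth: "(\<lambda>v :: 'b::real_normed_vector ^ 'n::finite. v $ i) \<in> borel_measurable borel"
  by (intro borel_measurable_continuous_onI linear_continuous_on bounded_linear_vec_nth)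

lemma power2_norm_vec: "(norm (v :: 'b::real_normed_vector ^ 'n::finite))\<^sup>2 = (\<Sum>i\<in>UNIV. (norm (v $ i))\<^sup>2)"
  unfolding norm_vec_def L2_set_def by (simp add: sum_nonneg)

lemma L2_vec_vec_lambda:
  fixes \<phi> :: "'n::finite \<Rightarrow> 'a \<Rightarrow> complex"
  assumes "\<And>i. L2_scalar M K (\<phi> i)"
  shows "L2_vec M K (\<lambda>x. \<chi> i. \<phi> i x)"
proof -
  have sq: "\<And>i. square_integrable M (\<phi> i)" and K: "\<And>i x. x \<in> space M \<Longrightarrow> \<phi> i x \<in> K"
    using assms L2_scalar_imp_square_integrable unfolding L2_scalar_def by blast+
  have "integrable M (\<lambda>x. \<Sum>i\<in>UNIV. (cmod (\<phi> i x))\<^sup>2)"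
    using sq unfolding square_integrable_def by (intro Bochner_Integration.integrable_sum) blast
  moreover have "(\<lambda>x. \<chi> i. \<phi> i x) \<in> borel_measurable M"
    using sq unfolding square_integrable_def by (intro borel_measurable_vec_lambda) blast
  ultimately show ?thesis
    using K unfolding L2_vec_def in_Kn_def by (simp add: power2_norm_vec)
qed

lemma square_integrable_vec_nth:
  assumes "L2_vec M K \<Phi>"
  shows "square_integrable M (\<lambda>x. \<Phi> x $ i)"
  unfolding square_integrable_def
proof
  have "\<Phi> \<in> borel_measurable M"
    using assms unfolding L2_vec_def by blast
  then show meas: "(\<lambda>x. \<Phi> x $ i) \<in> borel_measurable M"
    by (rule measurable_compose) (rule borel_measurable_vec_nth)
  show "integrable M (\<lambda>x. (cmod (\<Phi> x $ i))\<^sup>2)"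
  proof (rule Bochner_Integration.integrable_bound[OF _ _ AE_I2])
    show "integrable M (\<lambda>x. (norm (\<Phi> x))\<^sup>2)"
      using assms unfolding L2_vec_def by blast
    show "(\<lambda>x. (cmod (\<Phi> x $ i))\<^sup>2) \<in> borel_measurable M"
      using meas by measurable
    show "norm ((cmod (\<Phi> x $ i))\<^sup>2) \<le> norm ((norm (\<Phi> x))\<^sup>2)" for x
      by (simp add: power_mono) (rule Finite_Cartesian_Product.norm_nth_le)
  qed
qed

lemma square_integrable_cinner_vec:
  assumes "\<And>i. square_integrable M (\<lambda>x. \<Phi> x $ i)"
  shows "square_integrable M (\<lambda>x. cinner_vec v (\<Phi> x))"
  unfolding cinner_vec_def
  by (intro square_integrable_sum square_integrable_mult_left square_integrable_cnj assms) simp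

lemma cinner_vec_scaleR_left: "cinner_vec (c *\<^sub>R v) w = of_real c * cinner_vec v w"
  unfolding cinner_vec_def vector_scaleR_component by (simp add: sum_distrib_left scaleR_conv_of_real mult.assoc)

lemma cinner_vec_Cauchy_Schwarz: "(cmod (cinner_vec v w))\<^sup>2 \<le> (norm v)\<^sup>2 * (norm w)\<^sup>2"
proof -
  have "cmod (cinner_vec v w) \<le> (\<Sum>i\<in>UNIV. cmod (v $ i) * cmod (w $ i))"
    unfolding cinner_vec_def by (rule order_trans[OF norm_sum]) (simp add: norm_mult)
  also have "\<dots> \<le> L2_set (\<lambda>i. cmod (v $ i)) UNIV * L2_set (\<lambda>i. cmod (w $ i)) UNIV"
    using L2_set_mult_ineq[of "\<lambda>i. cmod (v $ i)" "\<lambda>i. cmod (w $ i)" UNIV] by simp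
  also have "\<dots> = norm v * norm w"
    unfolding norm_vec_def ..
  finally show ?thesis
    by (simp add: power_mult_distrib[symmetric] power_mono)
qed

lemma compact_unit_sphere_in_Kn:
  assumes "field_choice K"
  shows "compact {v :: complex ^ 'n::finite. in_Kn K v \<and> norm v = 1}"
proof (rule field_choiceE[OF assms])
  assume "K = \<real>"
  then have "{v :: complex ^ 'n. in_Kn K v \<and> norm v = 1} = sphere 0 1 \<inter> {v. \<forall>i. Im (v $ i) = 0}"
    unfolding in_Kn_def by (auto simp: complex_is_Real_iff)
  moreover have "closed {v :: complex ^ 'n. \<forall>i. Im (v $ i) = 0}"
    by (intro closed_Collect_all closed_Collect_eq continuous_on_Im linear_continuous_on[OF bounded_linear_vec_nth] continuous_on_const)
  ultimately show ?thesis
    by (simp add: compact_Int_closed)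
next
  assume "K = UNIV"
  then show ?thesis
    using compact_sphere[of "0 :: complex ^ 'n" 1] unfolding in_Kn_def by (simp add: sphere_def)
qed

lemma in_Kn_scaleR: "field_choice K \<Longrightarrow> in_Kn K v \<Longrightarrow> in_Kn K (c *\<^sub>R v)"
  unfolding in_Kn_def vector_scaleR_component by (simp add: scaleR_conv_of_real field_choice_mult field_choice_of_real)

lemma continuous_on_integral_cinner_vec_square:
  assumes sq: "\<And>i. square_integrable M (\<lambda>x. \<Phi> x $ i)"
  shows "continuous_on UNIV (\<lambda>v :: complex ^ 'n::finite. \<integral>x. (cmod (cinner_vec v (\<Phi> x)))\<^sup>2 \<partial>M)"
proof -
  define G where "G i k = (\<integral>x. cnj (\<Phi> x $ i) * \<Phi> x $ k \<partial>M)" for i k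
  have int: "integrable M (\<lambda>x. cnj (\<Phi> x $ i) * \<Phi> x $ k)" for i k
    by (intro integrable_mult_square_integrable square_integrable_cnj sq)
  have gram: "(\<integral>x. (cmod (cinner_vec v (\<Phi> x)))\<^sup>2 \<partial>M) = Re (\<Sum>i\<in>UNIV. \<Sum>k\<in>UNIV. v $ i * cnj (v $ k) * G i k)"
    for v :: "complex ^ 'n"
  proof -
    have "complex_of_real ((cmod (cinner_vec v (\<Phi> x)))\<^sup>2)
        = (\<Sum>i\<in>UNIV. \<Sum>k\<in>UNIV. v $ i * cnj (v $ k) * (cnj (\<Phi> x $ i) * \<Phi> x $ k))" for x
      unfolding complex_norm_square cinner_vec_def cnj_sum sum_product by (intro sum.cong refl) (simp add: mult_ac)
    then have "(cmod (cinner_vec v (\<Phi> x)))\<^sup>2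
        = Re (\<Sum>i\<in>UNIV. \<Sum>k\<in>UNIV. v $ i * cnj (v $ k) * (cnj (\<Phi> x $ i) * \<Phi> x $ k))" for x
      by (metis Re_complex_of_real)
    then have "(\<integral>x. (cmod (cinner_vec v (\<Phi> x)))\<^sup>2 \<partial>M)
        = Re (\<integral>x. (\<Sum>i\<in>UNIV. \<Sum>k\<in>UNIV. v $ i * cnj (v $ k) * (cnj (\<Phi> x $ i) * \<Phi> x $ k)) \<partial>M)"
      by (simp only:) (intro integral_Re Bochner_Integration.integrable_sum integrable_mult_right int)
    also have "(\<integral>x. (\<Sum>i\<in>UNIV. \<Sum>k\<in>UNIV. v $ i * cnj (v $ k) * (cnj (\<Phi> x $ i) * \<Phi> x $ k)) \<partial>M)
        = (\<Sum>i\<in>UNIV. \<Sum>k\<in>UNIV. v $ i * cnj (v $ k) * G i k)"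
      unfolding G_def by (simp add: int Bochner_Integration.integrable_sum)
    finally show ?thesis .
  qed
  show ?thesis
    unfolding gram by (intro continuous_intros linear_continuous_on bounded_linear_vec_nth)
qed

lemma homogeneous_function_lower_bound:
  fixes Q :: "complex ^ 'n::finite \<Rightarrow> real"
  assumes K: "field_choice K" and cont: "continuous_on UNIV Q"
    and hom: "\<And>c v. Q (c *\<^sub>R v) = c\<^sup>2 * Q v"
    and pos: "\<And>v. in_Kn K v \<Longrightarrow> v \<noteq> 0 \<Longrightarrow> 0 < Q v"
  obtains A where "0 < A" and "\<And>v. in_Kn K v \<Longrightarrow> A * (norm v)\<^sup>2 \<le> Q v"
proof -
  define S where "S = {v :: complex ^ 'n. in_Kn K v \<and> norm v = 1}"
  have "axis undefined 1 \<in> S"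
    using field_choice_of_real[OF K, of 1] field_choice_zero[OF K]
    unfolding S_def in_Kn_def by (simp add: norm_axis_1) (simp add: axis_def)
  then have "S \<noteq> {}"
    by blast
  then obtain v0 where v0: "v0 \<in> S" and min: "\<And>v. v \<in> S \<Longrightarrow> Q v0 \<le> Q v"
    using continuous_attains_inf[OF compact_unit_sphere_in_Kn[OF K] _ continuous_on_subset[OF cont]]
    unfolding S_def by blast
  show thesis
  proof (rule that)
    show "0 < Q v0"
      using pos v0 unfolding S_def by force
    fix v :: "complex ^ 'n" assume v: "in_Kn K v"
    show "Q v0 * (norm v)\<^sup>2 \<le> Q v"
    proof (cases "v = 0")
      case True
      then show ?thesis
        using hom[of 0 v] by simp
    next
      case False
      then have "(1 / norm v) *\<^sub>R v \<in> S"
        using in_Kn_scaleR[OF K v] unfolding S_def by simp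
      then have "Q v0 \<le> Q ((1 / norm v) *\<^sub>R v)"
        by (rule min)
      then have "Q v0 \<le> Q v / (norm v)\<^sup>2"
        unfolding hom by (simp add: power_divide)
      then show ?thesis
        using False by (simp add: pos_le_divide_eq)
    qed
  qed
qed

lemma integral_power2_norm_pos:
  fixes f :: "'a \<Rightarrow> 'b::real_normed_vector"
  assumes int: "integrable M (\<lambda>x. (norm (f x))\<^sup>2)" and nonzero: "\<not> (AE x in M. f x = 0)"
  shows "0 < (\<integral>x. (norm (f x))\<^sup>2 \<partial>M)"
proof -
  have "(\<integral>x. (norm (f x))\<^sup>2 \<partial>M) \<noteq> 0"
  proof
    assume "(\<integral>x. (norm (f x))\<^sup>2 \<partial>M) = 0"
    then have "AE x in M. (norm (f x))\<^sup>2 = 0"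
      using integral_nonneg_eq_0_iff_AE[OF int] by simp
    then have "AE x in M. f x = 0"
      by eventually_elim simp
    with nonzero show False ..
  qed
  moreover have "0 \<le> (\<integral>x. (norm (f x))\<^sup>2 \<partial>M)"
    by (rule Bochner_Integration.integral_nonneg_AE) simp
  ultimately show ?thesis
    by linarith
qed

lemma cont_frame_if_nondegenerate:
  assumes K: "field_choice K" and L2: "L2_vec M K \<Phi>"
    and nondeg: "\<And>v. in_Kn K v \<Longrightarrow> (AE x in M. cinner_vec v (\<Phi> x) = 0) \<Longrightarrow> v = 0"
  shows "cont_frame M K \<Phi>"
proof -
  define Q where "Q v = (\<integral>x. (cmod (cinner_vec v (\<Phi> x)))\<^sup>2 \<partial>M)" for v
  define N where "N = (\<integral>x. (norm (\<Phi> x))\<^sup>2 \<partial>M)"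
  have sq: "\<And>i. square_integrable M (\<lambda>x. \<Phi> x $ i)"
    using square_integrable_vec_nth[OF L2] .
  have int: "integrable M (\<lambda>x. (cmod (cinner_vec v (\<Phi> x)))\<^sup>2)" for v
    using square_integrable_cinner_vec[OF sq] unfolding square_integrable_def by blast
  have nn: "(\<integral>\<^sup>+x. ennreal ((cmod (cinner_vec v (\<Phi> x)))\<^sup>2) \<partial>M) = ennreal (Q v)" for v
    unfolding Q_def by (rule nn_integral_eq_integral[OF int]) simp
  have upper: "Q v \<le> N * (norm v)\<^sup>2" for v
  proof -
    have "Q v \<le> (\<integral>x. (norm v)\<^sup>2 * (norm (\<Phi> x))\<^sup>2 \<partial>M)"
      unfolding Q_def using L2 cinner_vec_Cauchy_Schwarz unfolding L2_vec_def
      by (intro Bochner_Integration.integral_mono int integrable_mult_right) auto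
    then show ?thesis
      by (simp add: N_def mult.commute)
  qed
  have pos: "0 < Q v" if "in_Kn K v" and "v \<noteq> 0" for v
    unfolding Q_def using nondeg that by (intro integral_power2_norm_pos int) auto
  have hom: "Q (c *\<^sub>R v) = c\<^sup>2 * Q v" for c v
    unfolding Q_def cinner_vec_scaleR_left by (simp add: norm_mult power_mult_distrib)
  obtain A where A: "0 < A" "\<And>v. in_Kn K v \<Longrightarrow> A * (norm v)\<^sup>2 \<le> Q v"
    using homogeneous_function_lower_bound[OF K _ hom pos] continuous_on_integral_cinner_vec_square[OF sq]
    unfolding Q_def by blast
  have "A \<le> max A N" "N * (norm v)\<^sup>2 \<le> max A N * (norm v)\<^sup>2" for v
    by (simp_all add: mult_right_mono)
  then show ?thesis
    using L2 sq A upper nn unfolding cont_frame_def L2_vec_def square_integrable_def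
    by (intro conjI exI[of _ A] exI[of _ "max A N"]) (auto intro!: ennreal_leI order_trans[OF upper])
qed

lemma nondegenerate_if_agrees_with_ae_independent:
  fixes g \<phi> :: "'n::finite \<Rightarrow> 'a \<Rightarrow> complex"
  assumes K: "field_choice K" and ind: "ae_independent M K UNIV g"
    and agree: "\<And>k x. x \<in> S \<Longrightarrow> \<phi> k x = g k x" and supp: "\<And>k x. g k x \<noteq> 0 \<Longrightarrow> x \<in> S"
    and v: "in_Kn K v" and ae: "AE x in M. cinner_vec v (\<chi> k. \<phi> k x) = 0"
  shows "v = 0"
proof -
  have "AE x in M. (\<Sum>k\<in>UNIV. cnj (v $ k) * g k x) = 0"
    using ae
  proof eventually_elim
    case (elim x)
    show ?case
    proof (cases "x \<in> S")
      case True
      then have "(\<Sum>k\<in>UNIV. cnj (v $ k) * g k x) = cnj (cinner_vec v (\<chi> k. \<phi> k x))"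
        by (simp add: cinner_vec_def agree)
      then show ?thesis
        using elim by simp
    next
      case False
      then have "g k x = 0" for k
        using supp by blast
      then show ?thesis
        by simp
    qed
  qed
  moreover have "\<forall>k. cnj (v $ k) \<in> K"
    using v field_choice_cnj[OF K] unfolding in_Kn_def by blast
  ultimately have "\<forall>k. cnj (v $ k) = 0"
    using ind unfolding ae_independent_def by (blast dest: spec[where x = "\<lambda>k. cnj (v $ k)"])
  then show ?thesis
    by (simp add: vec_eq_iff)
qed

section \<open>Prescribing the values of W\<close>

lemma integral_indicator_norm_square_pos:
  assumes h: "h \<in> borel_measurable M" "integrable M (\<lambda>x. (cmod (h x))\<^sup>2)" and Z: "Z \<in> sets M"
    and mass: "0 < emeasure M (Z \<inter> {x\<in>space M. h x \<noteq> 0})"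
  shows "0 < (\<integral>x. indicator Z x * (cmod (h x))\<^sup>2 \<partial>M)"
proof -
  have "\<not> (AE x in M. indicator Z x *\<^sub>R h x = 0)"
  proof
    assume "AE x in M. indicator Z x *\<^sub>R h x = 0"
    then have ae: "AE x in M. \<not> (x \<in> Z \<and> h x \<noteq> 0)"
      by eventually_elim (auto split: split_indicator)
    have N: "Z \<inter> {x\<in>space M. h x \<noteq> 0} \<in> sets M"
      using Z h(1) by measurable
    have "{x\<in>space M. \<not> \<not> (x \<in> Z \<and> h x \<noteq> 0)} = Z \<inter> {x\<in>space M. h x \<noteq> 0}"
      by blast
    then have "emeasure M (Z \<inter> {x\<in>space M. h x \<noteq> 0}) = 0"
      using AE_iff_measurable[where P = "\<lambda>x. \<not> (x \<in> Z \<and> h x \<noteq> 0)", OF N] ae by blast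
    with mass show False
      by simp
  qed
  moreover have "(norm (indicator Z x *\<^sub>R h x))\<^sup>2 = indicator Z x * (cmod (h x))\<^sup>2" for x
    by (simp split: split_indicator)
  moreover have "integrable M (\<lambda>x. indicator Z x * (cmod (h x))\<^sup>2)"
    using integrable_mult_indicator[OF Z h(2)] by simp
  ultimately show ?thesis
    using integral_power2_norm_pos[of M "\<lambda>x. indicator Z x *\<^sub>R h x"] by simp
qed

lemma indicator_mult_correction:
  fixes h u :: complex
  assumes "finite J" and disj: "disjoint_family_on X J" and j: "j \<in> J" and ZX: "\<And>j. j \<in> J \<Longrightarrow> Z j \<subseteq> X j"
  shows "indicator (X j) x *\<^sub>R (h * (u + (\<Sum>j'\<in>J. indicator (Z j') x *\<^sub>R (b j' * cnj h))))
    = indicator (X j) x *\<^sub>R (h * u) + b j * of_real (indicator (Z j) x * (cmod h)\<^sup>2)"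
proof (cases "x \<in> X j")
  case True
  have "x \<notin> Z j'" if "j' \<in> J - {j}" for j'
    using disj True that ZX j unfolding disjoint_family_on_def by blast
  then have "(\<Sum>j'\<in>J. indicator (Z j') x *\<^sub>R (b j' * cnj h)) = indicator (Z j) x *\<^sub>R (b j * cnj h)"
    using \<open>finite J\<close> j by (subst sum.remove[OF _ j]) (auto simp: sum.neutral)
  moreover have "h * cnj h = (complex_of_real (cmod h))\<^sup>2"
    by (simp add: complex_norm_square[symmetric])
  ultimately show ?thesis
    using True by (cases "x \<in> Z j") (simp_all add: distrib_left mult.left_commute)
next
  case False
  then have "x \<notin> Z j"
    using ZX j by blast
  with False show ?thesis
    by simp
qed

lemma integral_indicator_mult_correction:
  assumes "finite J" and disj: "disjoint_family_on X J" and j: "j \<in> J" and ZX: "\<And>j. j \<in> J \<Longrightarrow> Z j \<subseteq> X j"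
    and X: "X j \<in> sets M" and Z: "Z j \<in> sets M"
    and h: "square_integrable M h" and u: "square_integrable M u"
  shows "(\<integral>x. indicator (X j) x *\<^sub>R (h x * (u x + (\<Sum>j'\<in>J. indicator (Z j') x *\<^sub>R (b j' * cnj (h x))))) \<partial>M)
    = (\<integral>x. indicator (X j) x *\<^sub>R (h x * u x) \<partial>M) + b j * of_real (\<integral>x. indicator (Z j) x * (cmod (h x))\<^sup>2 \<partial>M)"
proof -
  have int_u: "integrable M (\<lambda>x. indicator (X j) x *\<^sub>R (h x * u x))"
    using X by (intro integrable_mult_indicator integrable_mult_square_integrable h u)
  have int_h: "integrable M (\<lambda>x. indicator (Z j) x * (cmod (h x))\<^sup>2)"
    using integrable_mult_indicator[OF Z, of "\<lambda>x. (cmod (h x))\<^sup>2"] h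
    unfolding square_integrable_def by simp
  have "indicator (X j) x *\<^sub>R (h x * (u x + (\<Sum>j'\<in>J. indicator (Z j') x *\<^sub>R (b j' * cnj (h x)))))
      = indicator (X j) x *\<^sub>R (h x * u x) + b j * of_real (indicator (Z j) x * (cmod (h x))\<^sup>2)" for x
    by (rule indicator_mult_correction[OF assms(1-4)])
  then show ?thesis
    by (simp only: Bochner_Integration.integral_add[OF int_u integrable_mult_right[OF integrable_of_real[OF int_h]]]
        integral_mult_right_zero integral_complex_of_real)
qed

lemma disjoint_pieces_complement:
  assumes "disjoint_family_on X J" and "\<And>j. j \<in> J \<Longrightarrow> Y j \<subseteq> X j"
  shows "(\<Union>j\<in>J. Y j) \<inter> (\<Union>j\<in>J. X j - Y j) = {}"
proof -
  have "x \<notin> X j' - Y j'" if "j \<in> J" "x \<in> Y j" "j' \<in> J" for x j j'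
    using assms that unfolding disjoint_family_on_def by (cases "j = j'") blast+
  then show ?thesis
    by blast
qed

lemma exists_correction_with_prescribed_W:
  fixes g :: "'n::finite \<Rightarrow> 'a \<Rightarrow> complex" and D :: "nat \<Rightarrow> complex ^ 'n"
  assumes K: "field_choice K" and "finite J"
    and X: "\<And>j. j \<in> J \<Longrightarrow> X j \<in> sets M" and disj: "disjoint_family_on X J"
    and Z: "\<And>j. j \<in> J \<Longrightarrow> Z j \<in> sets M" and ZX: "\<And>j. j \<in> J \<Longrightarrow> Z j \<subseteq> X j"
    and h: "L2_scalar M K h" and mass: "\<And>j. j \<in> J \<Longrightarrow> 0 < emeasure M (Z j \<inter> {x\<in>space M. h x \<noteq> 0})"
    and g: "\<And>k. L2_scalar M K (g k)" and D: "\<And>j. j \<in> J \<Longrightarrow> in_Kn K (D j)"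
  obtains \<phi> where "\<And>k. L2_scalar M K (\<phi> k)" and "\<And>k x. x \<notin> (\<Union>j\<in>J. Z j) \<Longrightarrow> \<phi> k x = g k x"
    and "\<And>j. j \<in> J \<Longrightarrow> W_op M h X (\<lambda>x. \<chi> k. \<phi> k x) j = D j"
proof -
  have hK: "\<And>x. x \<in> space M \<Longrightarrow> h x \<in> K" and gK: "\<And>k x. x \<in> space M \<Longrightarrow> g k x \<in> K"
    using h g unfolding L2_scalar_def by blast+
  have h_sq: "square_integrable M h" and g_sq: "\<And>k. square_integrable M (g k)"
    using L2_scalar_imp_square_integrable h g by blast+
  define s where "s j = (\<integral>x. indicator (Z j) x * (cmod (h x))\<^sup>2 \<partial>M)" for j
  define I where "I j k = (\<integral>x. indicator (X j) x *\<^sub>R (h x * g k x) \<partial>M)" for j k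
  define b where "b j k = (D j $ k - I j k) / of_real (s j)" for j k
  define \<phi> where "\<phi> k x = g k x + (\<Sum>j\<in>J. indicator (Z j) x *\<^sub>R (b j k * cnj (h x)))" for k x
  have s_pos: "0 < s j" if "j \<in> J" for j
    unfolding s_def using h_sq Z[OF that] mass[OF that]
    by (intro integral_indicator_norm_square_pos) (auto simp: square_integrable_def)
  have bK: "b j k \<in> K" if "j \<in> J" for j k
  proof -
    have "I j k \<in> K"
      unfolding I_def using K hK gK
      by (intro integral_in_field_choice) (auto simp: scaleR_conv_of_real intro!: field_choice_mult field_choice_of_real)
    then show ?thesis
      using D[OF that] K unfolding b_def in_Kn_def
      by (intro field_choice_divide field_choice_diff field_choice_of_real) auto
  qed
  have "square_integrable M (\<phi> k)" for k
    unfolding \<phi>_def using \<open>finite J\<close> Z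
    by (intro square_integrable_add g_sq square_integrable_sum square_integrable_indicator
        square_integrable_mult_left square_integrable_cnj h_sq) auto
  moreover have "\<phi> k x \<in> K" if "x \<in> space M" for k x
    unfolding \<phi>_def using that K hK gK bK
    by (auto simp: scaleR_conv_of_real intro!: field_choice_add field_choice_sum field_choice_mult
        field_choice_of_real field_choice_cnj)
  ultimately have \<phi>: "L2_scalar M K (\<phi> k)" for k
    unfolding L2_scalar_def square_integrable_def by blast
  show thesis
  proof (rule that[OF \<phi>])
    show "\<phi> k x = g k x" if "x \<notin> (\<Union>j\<in>J. Z j)" for k x
      using that unfolding \<phi>_def by simp
    show "W_op M h X (\<lambda>x. \<chi> k. \<phi> k x) j = D j" if j: "j \<in> J" for j
    proof -
      have "(\<integral>x. indicator (X j) x *\<^sub>R (h x * \<phi> k x) \<partial>M) = I j k + b j k * of_real (s j)" for k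
        unfolding \<phi>_def I_def s_def
        by (rule integral_indicator_mult_correction[OF \<open>finite J\<close> disj j ZX X[OF j] Z[OF j] h_sq g_sq])
      also have "I j k + b j k * of_real (s j) = D j $ k" for k
        using s_pos[OF j] unfolding b_def by simp
      finally show ?thesis
        unfolding W_op_def set_lebesgue_integral_def by (simp add: vec_eq_iff)
    qed
  qed
qed

theorem proposition5p8:
  fixes M :: "'a measure" and K :: "complex set" and l :: nat
    and X Y :: "nat \<Rightarrow> 'a set" and h :: "'a \<Rightarrow> complex"
  assumes "field_choice K"
    and "l \<ge> 1"
    and "\<forall>j\<in>{1..l}. X j \<in> sets M"
    and "\<forall>j\<in>{1..l}. \<forall>k\<in>{1..l}. j \<noteq> k \<longrightarrow> X j \<inter> X k = {}"
    and "(\<Union>j\<in>{1..l}. X j) = space M"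
    and "L2_scalar M K h"
    and "\<forall>j\<in>{1..l}. Y j \<in> sets M \<and> Y j \<subseteq> X j"
    and "\<forall>j\<in>{1..l}. emeasure M ((X j - Y j) \<inter> {x\<in>space M. h x \<noteq> 0}) > 0"
    and "(\<Sum>j\<in>{1..l}. L2_dim (restrict_space M (Y j)) K) \<ge> enat CARD('n::finite)"
  shows "\<forall>D :: nat \<Rightarrow> complex ^ 'n. (\<forall>j\<in>{1..l}. in_Kn K (D j)) \<longrightarrow>
           (\<exists>\<Phi> :: 'a \<Rightarrow> complex ^ 'n. L2_vec M K \<Phi> \<and> (\<forall>j\<in>{1..l}. W_op M h X \<Phi> j = D j)
              \<and> cont_frame M K \<Phi>)"
proof (intro allI impI)
  fix D :: "nat \<Rightarrow> complex ^ 'n" assume D: "\<forall>j\<in>{1..l}. in_Kn K (D j)"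
  have X: "\<And>j. j \<in> {1..l} \<Longrightarrow> X j \<in> sets M" and Y: "\<And>j. j \<in> {1..l} \<Longrightarrow> Y j \<in> sets M"
    and YX: "\<And>j. j \<in> {1..l} \<Longrightarrow> Y j \<subseteq> X j" and Z: "\<And>j. j \<in> {1..l} \<Longrightarrow> X j - Y j \<in> sets M"
    using assms(3,7) by blast+
  have disjX: "disjoint_family_on X {1..l}"
    using assms(4) unfolding disjoint_family_on_def by blast
  then have disjY: "disjoint_family_on Y {1..l}"
    using YX unfolding disjoint_family_on_def by blast
  obtain g :: "'n \<Rightarrow> 'a \<Rightarrow> complex" where g: "\<And>k. L2_scalar M K (g k)"
      and g_supp: "\<And>k x. g k x \<noteq> 0 \<Longrightarrow> x \<in> (\<Union>j\<in>{1..l}. Y j)" and g_ind: "ae_independent M K UNIV g"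
    using ae_independent_family_on_pieces[OF assms(1) finite_atLeastAtMost Y disjY assms(9)] by blast
  obtain \<phi> where \<phi>: "\<And>k. L2_scalar M K (\<phi> k)"
      and \<phi>_g: "\<And>k x. x \<notin> (\<Union>j\<in>{1..l}. X j - Y j) \<Longrightarrow> \<phi> k x = g k x"
      and W: "\<And>j. j \<in> {1..l} \<Longrightarrow> W_op M h X (\<lambda>x. \<chi> k. \<phi> k x) j = D j"
    using exists_correction_with_prescribed_W[where Z = "\<lambda>j. X j - Y j" and g = g and D = D,
        OF assms(1) finite_atLeastAtMost X disjX Z Diff_subset assms(6) assms(8)[rule_format] g D[rule_format]]
    by blast
  have \<phi>_eq_g: "\<phi> k x = g k x" if "x \<in> (\<Union>j\<in>{1..l}. Y j)" for k x
    using that disjoint_pieces_complement[OF disjX YX] by (intro \<phi>_g) blast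
  have "cont_frame M K (\<lambda>x. \<chi> k. \<phi> k x)"
    by (intro cont_frame_if_nondegenerate[OF assms(1) L2_vec_vec_lambda[OF \<phi>]]
        nondegenerate_if_agrees_with_ae_independent[OF assms(1) g_ind \<phi>_eq_g g_supp])
  then show "\<exists>\<Phi>. L2_vec M K \<Phi> \<and> (\<forall>j\<in>{1..l}. W_op M h X \<Phi> j = D j) \<and> cont_frame M K \<Phi>"
    using L2_vec_vec_lambda[OF \<phi>] W by (intro exI[of _ "\<lambda>x. \<chi> k. \<phi> k x"]) simp
qed

end
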